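(* Let $N\ge 1$ and let $\mathcal H_1,\dots,\mathcal H_N$ be finite-dimensional complex Hilbert spaces. Let $B$ be a finite set with $|B|=\prod_{j=1}^N \dim \mathcal H_j$ and let $(\psi_b)_{b\in B}$ be an orthonormal basis of $\bigotimes_{j=1}^N \mathcal H_j$. (i) If there exists an LOCC protocol (in the sense of the context; its local instruments and global classical operations are allowed to be unnormalised) which perfectly distinguishes the family $(\psi_b)_{b\in B}$, then no $\psi_b$ is entangled, i.e. every $\psi_b$ is a product state $\psi_b=\psi_{b,1}\otimes\cdots\otimes\psi_{b,N}$ with $\psi_{b,i}\in\mathcal H_i$. (ii) Conversely, if every $\psi_b$ is a product state, then there exists a unital LOCC protocol (possibly involving unnormalised local instruments/global classical operations) which perfectly distinguishes the family $(\psi_b)_{b\in B}$.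
   Context: Processes: quantum systems are finite-dimensional Hilbert spaces (acting on density operators), classical systems are finite sets $X$ (states are vectors in $(\mathbb R^{+})^X$). A process is a completely positive (CP) map between tensor products of quantum and classical systems, classical parts being treated as diagonal/commutative; a purely classical process $X\to Y$ is a $Y\times X$ matrix with non-negative real entries. A process is normalised if it is trace-preserving (on classical systems: its matrix is column-stochastic); "unnormalised" means no such requirement is imposed. A process is unital if it maps the identity operator on each quantum input (and the all-ones vector on each classical input) to the identity operator on each quantum output (resp. the all-ones vector on each classical output). Local instrument for party $i$: a CP process with one classical input and one quantum input of party $i$, and one classical output and one quantum output of party $i$ (the quantum systems of party $i$ being finite-dimensional Hilbert spaces, the first quantum input being $\mathcal H_i$). LOCC protocol with $R\ge1$ rounds: in each round $r$, first a global classical operation (a non-negative matrix) is applied, taking the classical outputs of all parties' local instruments from round $r-1$ to classical inputs of all parties for round $r$ (for $r=1$ this is a global classical state, with no inputs), and then each party $i$ applies a local instrument $M_i^{(r)}$ to its classical input and its current quantum system; the non-classical systems are untouched by the global classical operations. After round $R$, a global classical post-processing (non-negative matrix) maps the classical outputs of the parties' last instruments to a classical output in $B$, and the remaining quantum systems are discarded (traced out). Such a protocol perfectly distinguishes $(\psi_b)_{b\in B}$ if, for every $b\in B$, applying it to the input state $|\psi_b\rangle\langle\psi_b|$ on $\bigotimes_j\mathcal H_j$ yields exactly the point distribution $\delta_b$ on $B$. The protocol is called unital if the overall process it implements is unital. *)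

theory Defs
  imports Complex_Main "HOL-Library.FuncSet"
begin

text \<open>
  Party i (for i < N) holds a quantum system of dimension dims i, i.e. the Hilbert space
  C^(dims i).  The joint Hilbert space (tensor product of the parties' spaces) is modelled
  concretely with basis indexed by multi-indices j with j i < dims i for i < N.  Only values at valid multi-indices matter.
\<close>

type_synonym mindex = "nat \<Rightarrow> nat"
type_synonym jvec = "mindex \<Rightarrow> complex"
type_synonym jop = "mindex \<Rightarrow> mindex \<Rightarrow> complex"
type_synonym lmat = "nat \<Rightarrow> nat \<Rightarrow> complex"

definition Idx :: "nat \<Rightarrow> (nat \<Rightarrow> nat) \<Rightarrow> mindex set" where
  "Idx N dims = PiE {..<N} (\<lambda>i. {..<dims i})"

definition jinner :: "nat \<Rightarrow> (nat \<Rightarrow> nat) \<Rightarrow> jvec \<Rightarrow> jvec \<Rightarrow> complex" where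
  "jinner N dims u v = (\<Sum>j\<in>Idx N dims. cnj (u j) * v j)"

definition orthonormal_family :: "nat \<Rightarrow> (nat \<Rightarrow> nat) \<Rightarrow> 'b set \<Rightarrow> ('b \<Rightarrow> jvec) \<Rightarrow> bool" where
  "orthonormal_family N dims B \<psi> \<longleftrightarrow>
     (\<forall>b\<in>B. \<forall>b'\<in>B. jinner N dims (\<psi> b) (\<psi> b') = (if b = b' then 1 else 0))"

text \<open>An orthonormal basis of the joint space indexed by B (spanning follows from the
  cardinality condition, but we also state it explicitly).\<close>
definition orthonormal_basis :: "nat \<Rightarrow> (nat \<Rightarrow> nat) \<Rightarrow> 'b set \<Rightarrow> ('b \<Rightarrow> jvec) \<Rightarrow> bool" where
  "orthonormal_basis N dims B \<psi> \<longleftrightarrow>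
     orthonormal_family N dims B \<psi> \<and>
     (\<forall>v::jvec. \<exists>a::'b \<Rightarrow> complex. \<forall>j\<in>Idx N dims. v j = (\<Sum>b\<in>B. a b * \<psi> b j))"

definition product_state :: "nat \<Rightarrow> (nat \<Rightarrow> nat) \<Rightarrow> jvec \<Rightarrow> bool" where
  "product_state N dims \<psi> \<longleftrightarrow>
     (\<exists>\<phi>::nat \<Rightarrow> nat \<Rightarrow> complex. \<forall>j\<in>Idx N dims. \<psi> j = (\<Prod>i<N. \<phi> i (j i)))"

definition proj :: "jvec \<Rightarrow> jop" where
  "proj \<psi> = (\<lambda>j l. \<psi> j * cnj (\<psi> l))"

definition id_op :: jop where
  "id_op = (\<lambda>j l. if j = l then 1 else 0)"

text \<open>
  For round r (1 \<le> r \<le> R) and party i: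
  \<^item> nin P r i  : size of the classical input set {..<nin P r i} of party i's instrument;
  \<^item> nout P r i : size of the classical output set {..<nout P r i};
  \<^item> qdim P r i : dimension of party i's quantum system after round r (qdim P 0 i is the
                 dimension of the initial space H_i);
  \<^item> gop P r c w : entry of the global classical operation of round r (a non-negative matrix
                 from the tuples of round r-1 outputs to the tuples of round r inputs);
                 for r = 1 there is a unique (dummy) tuple of "round 0 outputs", so gop P 1
                 is a global classical state;
  \<^item> instr P r i y x : a list of Kraus operators (qdim P r i \<times> qdim P (r-1) i matrices)
                 of the CP map from party i's quantum system to its new quantum system
                 occurring with classical input x and classical output y.  A CP map between
                 (classical (+) quantum) systems with diagonal classical parts is exactly such
                 a family of CP maps indexed by (output, input) pairs, and each such CP map
                 is given by finitely many Kraus operators;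
  \<^item> post P b w : the global classical post-processing (non-negative matrix from tuples of
                 round R outputs to B).
\<close>
record 'b locc =
  rounds :: nat
  qdim :: "nat \<Rightarrow> nat \<Rightarrow> nat"
  nin :: "nat \<Rightarrow> nat \<Rightarrow> nat"
  nout :: "nat \<Rightarrow> nat \<Rightarrow> nat"
  gop :: "nat \<Rightarrow> mindex \<Rightarrow> mindex \<Rightarrow> real"
  instr :: "nat \<Rightarrow> nat \<Rightarrow> nat \<Rightarrow> nat \<Rightarrow> lmat list"
  post :: "'b \<Rightarrow> mindex \<Rightarrow> real"

definition locc_wf :: "nat \<Rightarrow> (nat \<Rightarrow> nat) \<Rightarrow> 'b locc \<Rightarrow> bool" where
  "locc_wf N dims P \<longleftrightarrow>
     rounds P \<ge> 1 \<and>
     (\<forall>i<N. qdim P 0 i = dims i) \<and>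
     (\<forall>r c w. gop P r c w \<ge> 0) \<and>
     (\<forall>b w. post P b w \<ge> 0)"

definition Ins :: "nat \<Rightarrow> 'b locc \<Rightarrow> nat \<Rightarrow> mindex set" where
  "Ins N P r = Idx N (nin P r)"

definition Outs :: "nat \<Rightarrow> 'b locc \<Rightarrow> nat \<Rightarrow> mindex set" where
  "Outs N P r = Idx N (\<lambda>i. if r = 0 then 1 else nout P r i)"

definition ktensor :: "nat \<Rightarrow> (nat \<Rightarrow> lmat) \<Rightarrow> jop" where
  "ktensor N K = (\<lambda>j' j. \<Prod>i<N. K i (j' i) (j i))"

definition conj_by :: "nat \<Rightarrow> (nat \<Rightarrow> nat) \<Rightarrow> jop \<Rightarrow> jop \<Rightarrow> jop" where
  "conj_by N din K \<sigma> = (\<lambda>j' l'. \<Sum>j\<in>Idx N din. \<Sum>l\<in>Idx N din. K j' j * \<sigma> j l * cnj (K l' l))"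

definition local_apply :: "nat \<Rightarrow> 'b locc \<Rightarrow> nat \<Rightarrow> mindex \<Rightarrow> mindex \<Rightarrow> jop \<Rightarrow> jop" where
  "local_apply N P r w c \<sigma> = (\<lambda>j' l'.
     \<Sum>k\<in>PiE {..<N} (\<lambda>i. {..<length (instr P r i (w i) (c i))}).
       conj_by N (qdim P (r - 1)) (ktensor N (\<lambda>i. instr P r i (w i) (c i) ! k i)) \<sigma> j' l')"

text \<open>The (unnormalised) joint quantum state after round r, indexed by the tuple of
  classical outputs of round r (for r = 0 the input state, with a dummy outcome tuple).\<close>
primrec qstate :: "nat \<Rightarrow> 'b locc \<Rightarrow> jop \<Rightarrow> nat \<Rightarrow> mindex \<Rightarrow> jop" where
  "qstate N P \<rho> 0 = (\<lambda>w. \<rho>)"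
| "qstate N P \<rho> (Suc r) = (\<lambda>w. \<lambda>j' l'.
     \<Sum>c\<in>Ins N P (Suc r).
       local_apply N P (Suc r) w c
         (\<lambda>j l. \<Sum>w'\<in>Outs N P r. complex_of_real (gop P (Suc r) c w') * qstate N P \<rho> r w' j l) j' l')"

text \<open>The (unnormalised) value of the output distribution on B at b, after tracing out the
  remaining quantum systems.\<close>
definition locc_output :: "nat \<Rightarrow> 'b locc \<Rightarrow> jop \<Rightarrow> 'b \<Rightarrow> complex" where
  "locc_output N P \<rho> b =
     (\<Sum>w\<in>Outs N P (rounds P). complex_of_real (post P b w) *
        (\<Sum>j\<in>Idx N (qdim P (rounds P)). qstate N P \<rho> (rounds P) w j j))"

definition perfectly_distinguishes :: "nat \<Rightarrow> 'b locc \<Rightarrow> 'b set \<Rightarrow> ('b \<Rightarrow> jvec) \<Rightarrow> bool" where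
  "perfectly_distinguishes N P B \<psi> \<longleftrightarrow>
     (\<forall>b\<in>B. \<forall>b'\<in>B. locc_output N P (proj (\<psi> b)) b' = (if b' = b then 1 else 0))"

text \<open>The overall process (no classical input, no quantum output, classical output B)
  is unital: it maps the identity on the joint input space to the all-ones vector on B.\<close>
definition locc_unital :: "nat \<Rightarrow> 'b locc \<Rightarrow> 'b set \<Rightarrow> bool" where
  "locc_unital N P B \<longleftrightarrow> (\<forall>b\<in>B. locc_output N P id_op b = 1)"

end

theory Submission
  imports Defs
begin

text \<open>
  Every LOCC protocol, however many rounds it has, acts on the input state as a separable map:
  a non-negative combination of conjugations by tensor products of local operators.  Hence the
  probability of an outcome b' on input \<psi> is a non-negative combination of terms
  |<k, \<psi>>|^2 with product vectors k.  If the protocol perfectly distinguishes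
  an orthonormal basis, one such product vector k is orthogonal to every \<psi> b except
  \<psi> b'; expanding k in the basis shows that \<psi> b' is proportional to k, so it is a
  product state.  Conversely, a basis of product states is distinguished in one round: party i
  applies the rank-one Kraus operators <\<phi> b i| and the outcome is b when all
  parties report b.
\<close>

lemma finite_Idx [simp]: "finite (Idx N d)"
  unfolding Idx_def by (intro finite_PiE) auto

lemma Idx_cong: "(\<And>i. i < N \<Longrightarrow> d i = d' i) \<Longrightarrow> Idx N d = Idx N d'"
  unfolding Idx_def by (intro PiE_cong) auto

lemma Idx_const_1: "Idx N (\<lambda>i. Suc 0) = {\<lambda>i\<in>{..<N}. 0}"
  unfolding Idx_def by (subst PiE_eq_singleton) auto

lemma conj_by_cong:
  assumes "\<And>j l. j \<in> Idx N d \<Longrightarrow> l \<in> Idx N d \<Longrightarrow> \<sigma> j l = \<sigma>' j l"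
  shows "conj_by N d K \<sigma> = conj_by N d K \<sigma>'"
  unfolding conj_by_def using assms by (intro ext sum.cong refl) auto

lemma conj_by_zero: "conj_by N d K (\<lambda>j l. 0) j' l' = 0"
  unfolding conj_by_def by simp

lemma conj_by_add:
  "conj_by N d K (\<lambda>j l. \<sigma> j l + \<tau> j l) j' l' = conj_by N d K \<sigma> j' l' + conj_by N d K \<tau> j' l'"
  unfolding conj_by_def by (simp add: distrib_left distrib_right sum.distrib)

lemma conj_by_scale: "conj_by N d K (\<lambda>j l. c * \<sigma> j l) j' l' = c * conj_by N d K \<sigma> j' l'"
  unfolding conj_by_def by (simp add: sum_distrib_left mult_ac)

lemma conj_by_conj_by:
  "conj_by N d2 K2 (conj_by N d1 K1 \<rho>) j' l' =
   conj_by N d1 (\<lambda>a m. \<Sum>j\<in>Idx N d2. K2 a j * K1 j m) \<rho> j' l'"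
proof -
  let ?t = "\<lambda>j m n l. K2 j' j * (K1 j m * \<rho> m n * cnj (K1 l n)) * cnj (K2 l' l)"
  have "conj_by N d1 (\<lambda>a m. \<Sum>j\<in>Idx N d2. K2 a j * K1 j m) \<rho> j' l' =
     (\<Sum>m\<in>Idx N d1. \<Sum>n\<in>Idx N d1. \<Sum>j\<in>Idx N d2. \<Sum>l\<in>Idx N d2. ?t j m n l)"
    unfolding conj_by_def by (simp add: sum_distrib_left sum_distrib_right mult_ac)
  also have "\<dots> = (\<Sum>m\<in>Idx N d1. \<Sum>j\<in>Idx N d2. \<Sum>n\<in>Idx N d1. \<Sum>l\<in>Idx N d2. ?t j m n l)"
    by (rule sum.cong[OF refl], rule sum.swap)
  also have "\<dots> = (\<Sum>j\<in>Idx N d2. \<Sum>m\<in>Idx N d1. \<Sum>n\<in>Idx N d1. \<Sum>l\<in>Idx N d2. ?t j m n l)"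
    by (rule sum.swap)
  also have "\<dots> = (\<Sum>j\<in>Idx N d2. \<Sum>m\<in>Idx N d1. \<Sum>l\<in>Idx N d2. \<Sum>n\<in>Idx N d1. ?t j m n l)"
    by (rule sum.cong[OF refl], rule sum.cong[OF refl], rule sum.swap)
  also have "\<dots> = (\<Sum>j\<in>Idx N d2. \<Sum>l\<in>Idx N d2. \<Sum>m\<in>Idx N d1. \<Sum>n\<in>Idx N d1. ?t j m n l)"
    by (rule sum.cong[OF refl], rule sum.swap)
  also have "\<dots> = conj_by N d2 K2 (conj_by N d1 K1 \<rho>) j' l'"
    unfolding conj_by_def by (simp add: sum_distrib_left sum_distrib_right mult_ac)
  finally show ?thesis by simp
qed

lemma ktensor_mult:
  "(\<Sum>j\<in>Idx N d. ktensor N A a j * ktensor N B j m) =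
   ktensor N (\<lambda>i x y. \<Sum>z<d i. A i x z * B i z y) a m"
  unfolding ktensor_def Idx_def by (subst prod_sum_PiE) (auto simp: prod.distrib)

lemma ktensor_id:
  assumes "j \<in> Idx N d" "a \<in> Idx N d"
  shows "ktensor N (\<lambda>i x y. if x = y then 1 else 0) j a = (if j = a then 1 else 0)"
proof (cases "j = a")
  case False
  then obtain i where "i < N" "j i \<noteq> a i"
    using assms unfolding Idx_def by (metis PiE_ext lessThan_iff)
  then show ?thesis
    using False unfolding ktensor_def by (auto intro!: prod_zero)
qed (simp add: ktensor_def)

lemma conj_by_ktensor_id:
  assumes "j' \<in> Idx N d" "l' \<in> Idx N d"
  shows "conj_by N d (ktensor N (\<lambda>i x y. if x = y then 1 else 0)) \<rho> j' l' = \<rho> j' l'"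
proof -
  have "conj_by N d (ktensor N (\<lambda>i x y. if x = y then 1 else 0)) \<rho> j' l'
      = (\<Sum>j\<in>Idx N d. if j = j' then (\<Sum>l\<in>Idx N d. if l = l' then \<rho> j l else 0) else 0)"
    unfolding conj_by_def using assms
    by (intro sum.cong refl)
      (auto simp: ktensor_id if_distrib[of cnj] if_distrib[of "\<lambda>y. x * y" for x] cong: if_cong)
  also have "\<dots> = \<rho> j' l'"
    using assms by simp
  finally show ?thesis .
qed

lemma local_apply_cong:
  assumes "\<And>j l. j \<in> Idx N (qdim P (r - 1)) \<Longrightarrow> l \<in> Idx N (qdim P (r - 1)) \<Longrightarrow>
    \<sigma> j l = \<sigma>' j l"
  shows "local_apply N P r w c \<sigma> = local_apply N P r w c \<sigma>'"
  unfolding local_apply_def using conj_by_cong[OF assms] by simp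

inductive separable_map :: "nat \<Rightarrow> (nat \<Rightarrow> nat) \<Rightarrow> (jop \<Rightarrow> jop) \<Rightarrow> bool" for N din where
  zero: "separable_map N din (\<lambda>\<rho> j l. 0)"
| kraus: "c \<ge> 0 \<Longrightarrow>
    separable_map N din (\<lambda>\<rho> j l. complex_of_real c * conj_by N din (ktensor N k) \<rho> j l)"
| add: "separable_map N din f \<Longrightarrow> separable_map N din g \<Longrightarrow>
    separable_map N din (\<lambda>\<rho> j l. f \<rho> j l + g \<rho> j l)"

lemma separable_map_sum:
  assumes "finite A" "\<And>a. a \<in> A \<Longrightarrow> separable_map N din (F a)"
  shows "separable_map N din (\<lambda>\<rho> j l. \<Sum>a\<in>A. F a \<rho> j l)"
  using assms
proof (induction A rule: finite_induct)
  case (insert x A)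
  have "separable_map N din (\<lambda>\<rho> j l. F x \<rho> j l + (\<Sum>a\<in>A. F a \<rho> j l))"
    using insert by (intro separable_map.add) auto
  then show ?case
    using insert by simp
qed (simp add: separable_map.zero)

lemma separable_map_scale:
  assumes "separable_map N din f" "c \<ge> 0"
  shows "separable_map N din (\<lambda>\<rho> j l. complex_of_real c * f \<rho> j l)"
  using assms
proof (induction rule: separable_map.induct)
  case zero
  then show ?case by (simp add: separable_map.zero)
next
  case (kraus c' k)
  have "separable_map N din
      (\<lambda>\<rho> j l. complex_of_real (c * c') * conj_by N din (ktensor N k) \<rho> j l)"
    using kraus by (intro separable_map.kraus) simp
  then show ?case
    by (simp add: mult.assoc)
next
  case (add f g)
  have "separable_map N din (\<lambda>\<rho> j l. complex_of_real c * f \<rho> j l + complex_of_real c * g \<rho> j l)"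
    using add by (intro separable_map.add) auto
  then show ?case
    by (simp add: distrib_left)
qed

lemma separable_map_conj_by_ktensor:
  assumes "separable_map N din f"
  shows "separable_map N din (\<lambda>\<rho>. conj_by N d (ktensor N A) (f \<rho>))"
  using assms
proof (induction rule: separable_map.induct)
  case zero
  then show ?case by (simp add: conj_by_zero separable_map.zero)
next
  case (kraus c k)
  then have "separable_map N din (\<lambda>\<rho> j l. complex_of_real c *
      conj_by N din (ktensor N (\<lambda>i x y. \<Sum>z<d i. A i x z * k i z y)) \<rho> j l)"
    by (rule separable_map.kraus)
  then show ?case
    by (simp add: conj_by_scale conj_by_conj_by ktensor_mult)
next
  case (add f g)
  then show ?case
    using separable_map.add[OF add.IH] by (simp add: conj_by_add)
qed

lemma separable_map_local_apply:
  assumes "separable_map N din f"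
  shows "separable_map N din (\<lambda>\<rho>. local_apply N P r w c (f \<rho>))"
  unfolding local_apply_def
  by (intro separable_map_sum separable_map_conj_by_ktensor assms) (auto intro: finite_PiE)

lemma qstate_separable:
  assumes "locc_wf N dims P"
  shows "\<exists>f. separable_map N dims f \<and>
    (\<forall>\<rho>. \<forall>j\<in>Idx N (qdim P r). \<forall>l\<in>Idx N (qdim P r). qstate N P \<rho> r w j l = f \<rho> j l)"
proof (induction r arbitrary: w)
  case 0
  have "Idx N (qdim P 0) = Idx N dims"
    using assms unfolding locc_wf_def by (intro Idx_cong) auto
  moreover have "separable_map N dims (\<lambda>\<rho> j l. complex_of_real 1 *
      conj_by N dims (ktensor N (\<lambda>i x y. if x = y then 1 else 0)) \<rho> j l)"
    by (rule separable_map.kraus) simp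
  ultimately show ?case
    by (intro exI conjI) (auto simp: conj_by_ktensor_id)
next
  case (Suc r)
  then obtain F where F: "\<And>w'. separable_map N dims (F w')"
    "\<And>w' \<rho> j l. j \<in> Idx N (qdim P r) \<Longrightarrow> l \<in> Idx N (qdim P r) \<Longrightarrow>
       qstate N P \<rho> r w' j l = F w' \<rho> j l"
    by metis
  define G where
    "G c \<rho> j l = (\<Sum>w'\<in>Outs N P r. complex_of_real (gop P (Suc r) c w') * F w' \<rho> j l)" for c \<rho> j l
  have "separable_map N dims (G c)" for c
    unfolding G_def using assms unfolding locc_wf_def
    by (intro separable_map_sum separable_map_scale F) (auto simp: Outs_def)
  then have "separable_map N dims
      (\<lambda>\<rho> j l. \<Sum>c\<in>Ins N P (Suc r). local_apply N P (Suc r) w c (G c \<rho>) j l)"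
    by (intro separable_map_sum separable_map_local_apply) (auto simp: Ins_def)
  moreover have "local_apply N P (Suc r) w c
      (\<lambda>j l. \<Sum>w'\<in>Outs N P r. complex_of_real (gop P (Suc r) c w') * qstate N P \<rho> r w' j l)
      = local_apply N P (Suc r) w c (G c \<rho>)" for c \<rho>
    by (rule local_apply_cong) (simp add: G_def F(2))
  ultimately show ?case
    by auto
qed

definition trace_on :: "mindex set \<Rightarrow> jop \<Rightarrow> complex" where
  "trace_on J \<sigma> = (\<Sum>j\<in>J. \<sigma> j j)"

lemma locc_output_separable:
  assumes "locc_wf N dims P"
  shows "\<exists>f. separable_map N dims f \<and>
    (\<forall>\<rho>. locc_output N P \<rho> b = trace_on (Idx N (qdim P (rounds P))) (f \<rho>))"
proof -
  let ?R = "rounds P"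
  obtain F where F: "\<And>w. separable_map N dims (F w)"
    "\<And>w \<rho> j l. j \<in> Idx N (qdim P ?R) \<Longrightarrow> l \<in> Idx N (qdim P ?R) \<Longrightarrow>
       qstate N P \<rho> ?R w j l = F w \<rho> j l"
    using qstate_separable[OF assms] by metis
  define G where
    "G \<rho> j l = (\<Sum>w\<in>Outs N P ?R. complex_of_real (post P b w) * F w \<rho> j l)" for \<rho> j l
  have "separable_map N dims G"
    unfolding G_def using assms unfolding locc_wf_def
    by (intro separable_map_sum separable_map_scale F) (auto simp: Outs_def)
  moreover have "locc_output N P \<rho> b = trace_on (Idx N (qdim P ?R)) (G \<rho>)" for \<rho>
    unfolding locc_output_def trace_on_def G_def sum_distrib_left
    by (subst sum.swap) (simp add: F(2))
  ultimately show ?thesis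
    by blast
qed

lemma trace_on_conj_by_proj:
  "trace_on J (conj_by N d K (proj \<phi>)) =
   complex_of_real (\<Sum>j\<in>J. (cmod (jinner N d (\<lambda>a. cnj (K j a)) \<phi>))\<^sup>2)"
  unfolding trace_on_def jinner_def complex_norm_square conj_by_def proj_def cnj_sum of_real_sum
  by (intro sum.cong refl)
    (simp add: sum_distrib_left sum_distrib_right mult_ac, rule sum.swap)

lemma trace_on_scale: "trace_on J (\<lambda>j l. c * \<sigma> j l) = c * trace_on J \<sigma>"
  unfolding trace_on_def by (simp add: sum_distrib_left)

lemma trace_on_add: "trace_on J (\<lambda>j l. \<sigma> j l + \<tau> j l) = trace_on J \<sigma> + trace_on J \<tau>"
  unfolding trace_on_def by (simp add: sum.distrib)

lemma separable_map_trace_proj_nonneg: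
  assumes "separable_map N d f"
  shows "\<exists>r\<ge>0. trace_on J (f (proj \<phi>)) = complex_of_real r"
  using assms
proof (induction rule: separable_map.induct)
  case zero
  then show ?case by (auto simp: trace_on_def)
next
  case (kraus c k)
  define s where "s = (\<Sum>j\<in>J. (cmod (jinner N d (\<lambda>a. cnj (ktensor N k j a)) \<phi>))\<^sup>2)"
  have "trace_on J (\<lambda>j l. complex_of_real c * conj_by N d (ktensor N k) (proj \<phi>) j l) =
    complex_of_real (c * s)"
    unfolding s_def by (simp only: trace_on_scale trace_on_conj_by_proj of_real_mult)
  moreover have "c * s \<ge> 0"
    unfolding s_def using kraus by (simp add: sum_nonneg)
  ultimately show ?case
    by blast
next
  case (add f g)
  then show ?case
    unfolding trace_on_add by (metis add_nonneg_nonneg of_real_add)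
qed

lemma jinner_orthonormal_expansion:
  assumes "orthonormal_family N dims B \<psi>" "finite B" "b \<in> B"
    and "\<forall>a\<in>Idx N dims. v a = (\<Sum>b'\<in>B. \<alpha> b' * \<psi> b' a)"
  shows "jinner N dims v (\<psi> b) = cnj (\<alpha> b)"
proof -
  have "jinner N dims v (\<psi> b) = (\<Sum>a\<in>Idx N dims. \<Sum>b'\<in>B. cnj (\<alpha> b') * (cnj (\<psi> b' a) * \<psi> b a))"
    unfolding jinner_def using assms(4)
    by (intro sum.cong refl) (simp add: sum_distrib_left sum_distrib_right mult_ac)
  also have "\<dots> = (\<Sum>b'\<in>B. cnj (\<alpha> b') * jinner N dims (\<psi> b') (\<psi> b))"
    unfolding jinner_def by (subst sum.swap) (simp add: sum_distrib_left)
  also have "\<dots> = (\<Sum>b'\<in>B. if b' = b then cnj (\<alpha> b') else 0)"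
    using assms(1,3) unfolding orthonormal_family_def by (intro sum.cong refl) simp
  also have "\<dots> = cnj (\<alpha> b)"
    using assms(2,3) by simp
  finally show ?thesis .
qed

text \<open>The scalar factor is absorbed into the first tensor factor; this needs N \<ge> 1.\<close>

lemma product_state_of_unique_product_overlap:
  assumes N: "N \<ge> 1" and ONB: "orthonormal_basis N dims B \<psi>" and "finite B" "b' \<in> B"
    and u: "\<forall>a\<in>Idx N dims. u a = (\<Prod>i<N. k i (a i))"
    and orth: "\<forall>b\<in>B - {b'}. jinner N dims u (\<psi> b) = 0"
    and overlap: "jinner N dims u (\<psi> b') \<noteq> 0"
  shows "product_state N dims (\<psi> b')"
proof -
  obtain \<alpha> where \<alpha>: "\<forall>a\<in>Idx N dims. u a = (\<Sum>b\<in>B. \<alpha> b * \<psi> b a)"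
    using ONB unfolding orthonormal_basis_def by blast
  have coeff: "jinner N dims u (\<psi> b) = cnj (\<alpha> b)" if "b \<in> B" for b
    using ONB \<open>finite B\<close> that \<alpha> unfolding orthonormal_basis_def
    by (intro jinner_orthonormal_expansion) auto
  have "\<alpha> b = 0" if "b \<in> B - {b'}" for b
    using coeff[of b] orth that by simp
  then have u_eq: "u a = \<alpha> b' * \<psi> b' a" if "a \<in> Idx N dims" for a
    using \<alpha> that \<open>finite B\<close> \<open>b' \<in> B\<close> by (simp add: sum.remove)
  have "\<alpha> b' \<noteq> 0"
    using coeff[OF \<open>b' \<in> B\<close>] overlap by simp
  define \<phi> where "\<phi> i x = k i x * (if i = 0 then inverse (\<alpha> b') else 1)" for i x
  have "\<psi> b' a = (\<Prod>i<N. \<phi> i (a i))" if "a \<in> Idx N dims" for a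
    using N u_eq[OF that] u that \<open>\<alpha> b' \<noteq> 0\<close>
    by (simp add: \<phi>_def prod.distrib field_simps)
  then show ?thesis
    unfolding product_state_def by blast
qed

lemma trace_conj_by_ktensor_detects_product_state:
  assumes N: "N \<ge> 1" and ONB: "orthonormal_basis N dims B \<psi>" and "finite B" "b' \<in> B"
    and zero: "\<forall>b\<in>B - {b'}. trace_on J (conj_by N dims (ktensor N k) (proj (\<psi> b))) = 0"
    and nonzero: "trace_on J (conj_by N dims (ktensor N k) (proj (\<psi> b'))) \<noteq> 0"
  shows "product_state N dims (\<psi> b')"
proof -
  define row where "row j a = cnj (ktensor N k j a)" for j a
  define s where "s \<phi> = (\<Sum>j\<in>J. (cmod (jinner N dims (row j) \<phi>))\<^sup>2)" for \<phi>
  have tr: "trace_on J (conj_by N dims (ktensor N k) (proj \<phi>)) = complex_of_real (s \<phi>)" for \<phi>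
    unfolding row_def s_def by (rule trace_on_conj_by_proj)
  have "s (\<psi> b') \<noteq> 0"
    using nonzero unfolding tr by simp
  then have "finite J"
    unfolding s_def by (meson sum.infinite)
  obtain j where "j \<in> J" and "(cmod (jinner N dims (row j) (\<psi> b')))\<^sup>2 \<noteq> 0"
    using \<open>s (\<psi> b') \<noteq> 0\<close> unfolding s_def by (meson sum.neutral)
  then have overlap: "jinner N dims (row j) (\<psi> b') \<noteq> 0"
    by simp
  have "jinner N dims (row j) (\<psi> b) = 0" if "b \<in> B - {b'}" for b
  proof -
    have "s (\<psi> b) = 0"
      using zero that unfolding tr by simp
    then show ?thesis
      using \<open>finite J\<close> \<open>j \<in> J\<close> unfolding s_def by (simp add: sum_nonneg_eq_0_iff)
  qed
  then show ?thesis
    using overlap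
    by (intro product_state_of_unique_product_overlap[OF N ONB \<open>finite B\<close> \<open>b' \<in> B\<close>,
        where k = "\<lambda>i x. cnj (k i (j i) x)"]) (auto simp: row_def ktensor_def)
qed

lemma separable_map_detects_product_state:
  assumes f: "separable_map N dims f"
    and N: "N \<ge> 1" and ONB: "orthonormal_basis N dims B \<psi>" and "finite B" "b' \<in> B"
    and "\<forall>b\<in>B - {b'}. trace_on J (f (proj (\<psi> b))) = 0"
    and "trace_on J (f (proj (\<psi> b'))) \<noteq> 0"
  shows "product_state N dims (\<psi> b')"
  using f assms(6,7)
proof (induction rule: separable_map.induct)
  case zero
  then show ?case by (simp add: trace_on_def)
next
  case (kraus c k)
  then have "c \<noteq> 0"
    by (auto simp: trace_on_scale)
  with kraus.prems show ?case
    by (intro trace_conj_by_ktensor_detects_product_state[OF N ONB \<open>finite B\<close> \<open>b' \<in> B\<close>])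
      (auto simp: trace_on_scale)
next
  case (add f g)
  have "trace_on J (f (proj (\<psi> b))) = 0 \<and> trace_on J (g (proj (\<psi> b))) = 0"
    if "b \<in> B - {b'}" for b
  proof -
    obtain r1 r2 where "r1 \<ge> 0" "r2 \<ge> 0"
      and "trace_on J (f (proj (\<psi> b))) = complex_of_real r1"
      and "trace_on J (g (proj (\<psi> b))) = complex_of_real r2"
      using separable_map_trace_proj_nonneg[OF add.hyps(1)]
        separable_map_trace_proj_nonneg[OF add.hyps(2)] by meson
    moreover have "trace_on J (f (proj (\<psi> b))) + trace_on J (g (proj (\<psi> b))) = 0"
      using add.prems(1) that unfolding trace_on_add by blast
    ultimately show ?thesis
      by (metis add_nonneg_eq_0_iff of_real_0 of_real_add of_real_eq_iff)
  qed
  moreover have "trace_on J (f (proj (\<psi> b'))) \<noteq> 0 \<or> trace_on J (g (proj (\<psi> b'))) \<noteq> 0"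
    using add.prems(2) unfolding trace_on_add by auto
  ultimately show ?case
    using add.IH by blast
qed

lemma perfectly_distinguishes_imp_product_state:
  assumes N: "N \<ge> 1" and "finite B" and ONB: "orthonormal_basis N dims B \<psi>"
    and "locc_wf N dims P" and "perfectly_distinguishes N P B \<psi>" and "b' \<in> B"
  shows "product_state N dims (\<psi> b')"
proof -
  obtain f where f: "separable_map N dims f"
    and out: "\<And>\<rho>. locc_output N P \<rho> b' = trace_on (Idx N (qdim P (rounds P))) (f \<rho>)"
    using locc_output_separable[OF \<open>locc_wf N dims P\<close>] by blast
  show ?thesis
    using assms(5,6) unfolding perfectly_distinguishes_def
    by (intro separable_map_detects_product_state[OF f N ONB \<open>finite B\<close> \<open>b' \<in> B\<close>,
        where J = "Idx N (qdim P (rounds P))"])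
      (auto simp: out[symmetric])
qed

definition sandwich :: "nat \<Rightarrow> (nat \<Rightarrow> nat) \<Rightarrow> jvec \<Rightarrow> jop \<Rightarrow> complex" where
  "sandwich N d u \<rho> = (\<Sum>j\<in>Idx N d. \<Sum>l\<in>Idx N d. cnj (u j) * \<rho> j l * u l)"

lemma sandwich_proj: "sandwich N d u (proj v) = jinner N d u v * cnj (jinner N d u v)"
  unfolding sandwich_def jinner_def proj_def cnj_sum
  by (simp add: sum_distrib_left sum_distrib_right mult_ac)

lemma sandwich_id_op: "sandwich N d u id_op = jinner N d u u"
  unfolding sandwich_def jinner_def id_op_def
  by (intro sum.cong refl)
    (simp add: if_distrib[of "\<lambda>x. y * x" for y] if_distrib[of "\<lambda>x. x * y" for y] cong: if_cong)

text \<open>On outcome y < n party i applies the 1 \<times> dims i Kraus operator <\<Phi> (g y) i|; the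
  result is b when every party reports the index of b in the enumeration g.\<close>

definition product_measurement ::
  "nat \<Rightarrow> (nat \<Rightarrow> nat) \<Rightarrow> nat \<Rightarrow> (nat \<Rightarrow> 'b) \<Rightarrow> ('b \<Rightarrow> nat \<Rightarrow> nat \<Rightarrow> complex) \<Rightarrow> 'b locc" where
  "product_measurement N dims n g \<Phi> = \<lparr>rounds = 1, qdim = (\<lambda>r i. if r = 0 then dims i else 1),
    nin = (\<lambda>r i. 1), nout = (\<lambda>r i. n), gop = (\<lambda>r c w. 1),
    instr = (\<lambda>r i y x. if y < n then [\<lambda>a m. cnj (\<Phi> (g y) i m)] else []),
    post = (\<lambda>b w. if w = (\<lambda>i\<in>{..<N}. the_inv_into {..<n} g b) then 1 else 0)\<rparr>"

lemma locc_output_product_measurement: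
  assumes g: "bij_betw g {..<n} B" and "b \<in> B"
    and \<Phi>: "\<forall>j\<in>Idx N dims. \<psi> j = (\<Prod>i<N. \<Phi> b i (j i))"
  shows "locc_output N (product_measurement N dims n g \<Phi>) \<rho> b = sandwich N dims \<psi> \<rho>"
proof -
  define P where "P = product_measurement N dims n g \<Phi>"
  define e where "e = the_inv_into {..<n} g b"
  define z :: mindex where "z = (\<lambda>i\<in>{..<N}. 0)"
  define D :: mindex where "D = (\<lambda>i\<in>{..<N}. e)"
  have "e < n" "g e = b"
    using g \<open>b \<in> B\<close> unfolding e_def bij_betw_def
    by (auto simp: the_inv_into_f_f)
  have rounds: "rounds P = 1" and gop: "gop P r c w = 1"
    and post: "post P b w = (if w = D then 1 else 0)" for r c w
    unfolding P_def product_measurement_def D_def e_def by simp_all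
  have "D \<in> Outs N P 1"
    unfolding D_def P_def product_measurement_def Outs_def Idx_def using \<open>e < n\<close> by auto
  have Ins: "Ins N P (Suc 0) = {z}" and Outs0: "Outs N P 0 = {z}"
    and Idx1: "Idx N (qdim P 1) = {z}" and Idx0: "Idx N (qdim P 0) = Idx N dims"
    unfolding Ins_def Outs_def P_def product_measurement_def z_def by (simp_all add: Idx_const_1)
  have kraus: "PiE {..<N} (\<lambda>i. {..<length (instr P (Suc 0) i (D i) (z i))}) = {z}"
    unfolding z_def D_def P_def product_measurement_def using \<open>e < n\<close>
    by (subst PiE_eq_singleton) auto
  have row: "ktensor N (\<lambda>i. instr P (Suc 0) i (D i) (z i) ! z i) z j = cnj (\<psi> j)"
    if "j \<in> Idx N dims" for j
    unfolding ktensor_def P_def product_measurement_def D_def z_def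
    using \<open>e < n\<close> \<open>g e = b\<close> \<Phi> that by simp
  have "qstate N P \<rho> 1 D z z = local_apply N P (Suc 0) D z \<rho> z z"
    by (simp only: One_nat_def qstate.simps Ins Outs0 gop sum.insert sum.empty finite.emptyI
        empty_iff of_real_1 mult_1 add_0_right; simp)
  also have "\<dots> = conj_by N (qdim P 0) (ktensor N (\<lambda>i. instr P (Suc 0) i (D i) (z i) ! z i)) \<rho> z z"
    unfolding local_apply_def kraus by simp
  also have "\<dots> = sandwich N dims \<psi> \<rho>"
    unfolding conj_by_def sandwich_def Idx0 by (intro sum.cong refl) (simp add: row)
  finally have qstate: "qstate N P \<rho> 1 D z z = sandwich N dims \<psi> \<rho>" .
  have "locc_output N P \<rho> b = (\<Sum>w\<in>Outs N P 1. if w = D then qstate N P \<rho> 1 w z z else 0)"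
    unfolding locc_output_def rounds Idx1 post by (intro sum.cong refl) auto
  also have "\<dots> = qstate N P \<rho> 1 D z z"
    using \<open>D \<in> Outs N P 1\<close> by (simp add: Outs_def)
  finally show ?thesis
    using qstate unfolding P_def by simp
qed

lemma product_basis_unital_locc_distinguishable:
  assumes "finite B" and ONB: "orthonormal_basis N dims B \<psi>"
    and "\<forall>b\<in>B. product_state N dims (\<psi> b)"
  shows "\<exists>P :: 'b locc. locc_wf N dims P \<and> locc_unital N P B \<and> perfectly_distinguishes N P B \<psi>"
proof -
  obtain g where g: "bij_betw g {..<card B} B"
    using ex_bij_betw_nat_finite[OF \<open>finite B\<close>] unfolding lessThan_atLeast0 by blast
  obtain \<Phi> where \<Phi>: "\<forall>b\<in>B. \<forall>j\<in>Idx N dims. \<psi> b j = (\<Prod>i<N. \<Phi> b i (j i))"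
    using assms(3) unfolding product_state_def by metis
  define P where "P = product_measurement N dims (card B) g \<Phi>"
  have out: "locc_output N P \<rho> b = sandwich N dims (\<psi> b) \<rho>" if "b \<in> B" for b \<rho>
    unfolding P_def using g that \<Phi> by (intro locc_output_product_measurement) auto
  have orthonormal: "jinner N dims (\<psi> b) (\<psi> b') = (if b = b' then 1 else 0)"
    if "b \<in> B" "b' \<in> B" for b b'
    using ONB that unfolding orthonormal_basis_def orthonormal_family_def by blast
  have "locc_wf N dims P"
    unfolding P_def product_measurement_def locc_wf_def by simp
  moreover have "locc_unital N P B"
    unfolding locc_unital_def by (simp add: out sandwich_id_op orthonormal)
  moreover have "perfectly_distinguishes N P B \<psi>"
    unfolding perfectly_distinguishes_def by (simp add: out sandwich_proj orthonormal)
  ultimately show ?thesis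
    by blast
qed

theorem theorem1:
  fixes N :: nat and dims :: "nat \<Rightarrow> nat" and B :: "'b set" and \<psi> :: "'b \<Rightarrow> jvec"
  assumes "N \<ge> 1"
    and "finite B"
    and "card B = (\<Prod>i<N. dims i)"
    and "orthonormal_basis N dims B \<psi>"
  shows "((\<exists>P :: 'b locc. locc_wf N dims P \<and> perfectly_distinguishes N P B \<psi>)
            \<longrightarrow> (\<forall>b\<in>B. product_state N dims (\<psi> b)))
       \<and> ((\<forall>b\<in>B. product_state N dims (\<psi> b))
            \<longrightarrow> (\<exists>P :: 'b locc. locc_wf N dims P \<and> locc_unital N P B
                                  \<and> perfectly_distinguishes N P B \<psi>))"
  using perfectly_distinguishes_imp_product_state[OF assms(1,2,4)]
    product_basis_unital_locc_distinguishable[OF assms(2,4)]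
  by blast

end
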